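(* For $1\le i<r$, \[ C_{i+1,r}(a)=C_{i,r}(a)+\sum_{k=r-i+1}^{r-1}C_{r-i+1,k}(a)\,C_{r-k,r-k}(a)-\sum_{k=i}^{r-1}C_{i,k}(a)\,C_{r-k,r-k}(a) \] as polynomials in $a$.
   Context: Bernoulli polynomials $B_n(a)$: $\sum_{n\ge0}B_n(a)x^n/n!=xe^{ax}/(e^x-1)$. For $1\le i\le r$, let $S_{i,r}$ be the set of $(n_1,\dots,n_r)\in\mathbb Z_{\ge0}^r$ with $n_1+\dots+n_r=r$, $n_1+\dots+n_j<j$ ($1\le j<i$), and $n_{j+1}+\dots+n_r\le r-j$ ($i\le j<r$), and set $C_{i,r}(a)=(-1)^r\sum_{(n_1,\dots,n_r)\in S_{i,r}}\prod_{j=1}^r\frac{B_{n_j}(a)}{n_j!}$. (These are the asymptotic coefficients at the origin of the Hurwitz multiple zeta function with all parameters equal to $a$.) *)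

theory Defs
  imports Complex_Main
begin

text \<open>Bernoulli polynomials with generating function x e^{ax}/(e^x - 1), via the
  recursion (n+1) a^n = sum_{k<=n} (n+1 choose k) B_k(a).\<close>
fun bernpoly :: "nat \<Rightarrow> real \<Rightarrow> real" where
  "bernpoly n a = a ^ n - (\<Sum>k<n. real ((Suc n) choose k) * bernpoly k a) / real (Suc n)"

declare bernpoly.simps [simp del]

text \<open>S_{i,r}: tuples (n_1,...,n_r) represented as lists ns with ns ! (j-1) = n_j.\<close>
definition S_set :: "nat \<Rightarrow> nat \<Rightarrow> nat list set" where
  "S_set i r = {ns. length ns = r \<and> sum_list ns = r
      \<and> (\<forall>j. 1 \<le> j \<and> j < i \<longrightarrow> (\<Sum>l<j. ns ! l) < j)
      \<and> (\<forall>j. i \<le> j \<and> j < r \<longrightarrow> (\<Sum>l\<in>{j..<r}. ns ! l) \<le> r - j)}"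

definition C_coef :: "nat \<Rightarrow> nat \<Rightarrow> real \<Rightarrow> real" where
  "C_coef i r a = (-1) ^ r * (\<Sum>ns\<in>S_set i r. \<Prod>j<r. bernpoly (ns ! j) a / fact (ns ! j))"

end

theory Submission
  imports Defs
begin

text \<open>Read a tuple (n_1, ..., n_r) with n_1 + ... + n_r = r as a lattice path with steps n_j - 1:
  its height after j steps is n_1 + ... + n_j - j, and it returns to 0 after r steps. Then S_{i,r}
  consists of the paths that are negative strictly before step i and nonnegative from step i on,
  and C_{i,r}(a) is (-1)^r times the total weight T_i(r) of these paths, a path weighing
  \<Prod>_j B_{n_j}(a)/n_j!.

  Cutting a path at its first zero at or after i gives T_i(r) = \<Sum>_t Y_i(t) E(r - t), where Y_i
  weighs paths that are negative before i and positive from i on, and E nonnegative paths.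
  Cutting a nonpositive path at its last zero, together with reflection, gives
  E(n) = \<Sum>_{s<n} E(s) N(n - s), where N(m) = T_m(m) weighs negative paths. Combining the two,
  \<Sum>_{k=i}^{r-1} T_i(k) N(r - k) = T_i(r) - Y_i(r). Reversing paths shows Y_i(r) = Y_{r-i+1}(r),
  and reversal followed by moving the leading zero step to the end shows T_{i+1}(r) = T_{r-i+1}(r).
  Subtracting the identity for i from the one for r - i + 1 gives the theorem.\<close>

definition height :: "nat list \<Rightarrow> nat \<Rightarrow> int" where
  "height ns j = int (sum_list (take j ns)) - int j"

definition tuples :: "(nat \<Rightarrow> int \<Rightarrow> bool) \<Rightarrow> nat \<Rightarrow> nat list set" where
  "tuples c n = {ns. length ns = n \<and> sum_list ns = n \<and> (\<forall>j. 1 \<le> j \<and> j < n \<longrightarrow> c j (height ns j))}"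

definition weight :: "(nat \<Rightarrow> 'a::comm_semiring_1) \<Rightarrow> (nat \<Rightarrow> int \<Rightarrow> bool) \<Rightarrow> nat \<Rightarrow> 'a" where
  "weight f c n = (\<Sum>ns\<in>tuples c n. prod_list (map f ns))"

definition switched :: "(int \<Rightarrow> bool) \<Rightarrow> (int \<Rightarrow> bool) \<Rightarrow> nat \<Rightarrow> nat \<Rightarrow> int \<Rightarrow> bool" where
  "switched p q i l h \<longleftrightarrow> (if l < i then p h else q h)"

abbreviation neg_then_nonneg :: "nat \<Rightarrow> nat \<Rightarrow> int \<Rightarrow> bool" where
  "neg_then_nonneg \<equiv> switched (\<lambda>h. h < 0) (\<lambda>h. 0 \<le> h)"

abbreviation nonpos_then_pos :: "nat \<Rightarrow> nat \<Rightarrow> int \<Rightarrow> bool" where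
  "nonpos_then_pos \<equiv> switched (\<lambda>h. h \<le> 0) (\<lambda>h. 0 < h)"

abbreviation neg_then_pos :: "nat \<Rightarrow> nat \<Rightarrow> int \<Rightarrow> bool" where
  "neg_then_pos \<equiv> switched (\<lambda>h. h < 0) (\<lambda>h. 0 < h)"

lemma height_0 [simp]: "height ns 0 = 0"
  by (simp add: height_def)

lemma height_length: "length ns = n \<Longrightarrow> sum_list ns = n \<Longrightarrow> height ns n = 0"
  by (simp add: height_def)

lemma height_take: "l \<le> k \<Longrightarrow> height (take k ns) l = height ns l"
  by (simp add: height_def min_absorb1)

lemma height_drop: "height (drop k ns) l = height ns (k + l) - height ns k"
  by (simp add: height_def take_add)

lemma height_Cons_Suc: "height (x # xs) (Suc l) = int x + height xs l - 1"
  by (simp add: height_def)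

lemma height_snoc: "l \<le> length xs \<Longrightarrow> height (xs @ [y]) l = height xs l"
  by (simp add: height_def)

lemma height_rev:
  assumes "length ns = n" "sum_list ns = n" "j \<le> n"
  shows "height (rev ns) j = - height ns (n - j)"
proof -
  have "take j (rev ns) = rev (drop (n - j) ns)"
    using assms by (simp add: take_rev)
  moreover have "sum_list ns = sum_list (take (n - j) ns) + sum_list (drop (n - j) ns)"
    by (metis append_take_drop_id sum_list_append)
  ultimately show ?thesis
    using assms by (simp add: height_def sum_list_rev)
qed

lemma finite_tuples: "finite (tuples c n)"
proof (rule finite_subset)
  show "tuples c n \<subseteq> {xs. set xs \<subseteq> {..n} \<and> length xs = n}"
    unfolding tuples_def using member_le_sum_list by fastforce
qed (simp add: finite_lists_length_eq)

lemma weight_cong: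
  "(\<And>l h. 1 \<le> l \<Longrightarrow> l < n \<Longrightarrow> c l h = c' l h) \<Longrightarrow> weight f c n = weight f c' n"
  unfolding weight_def tuples_def by (rule sum.cong) auto

lemma weight_0 [simp]: "weight f c 0 = 1"
proof -
  have "tuples c 0 = {[]}"
    by (auto simp: tuples_def)
  then show ?thesis
    by (simp add: weight_def)
qed

lemma take_drop_in_tuples_iff:
  assumes "length ns = n" "k \<le> n"
  shows "take k ns \<in> tuples c k \<and> drop k ns \<in> tuples c' (n - k) \<longleftrightarrow>
    sum_list ns = n \<and> height ns k = 0 \<and> (\<forall>l. 1 \<le> l \<and> l < k \<longrightarrow> c l (height ns l))
      \<and> (\<forall>l. 1 \<le> l \<and> l < n - k \<longrightarrow> c' l (height ns (k + l)))"
proof -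
  have "sum_list ns = sum_list (take k ns) + sum_list (drop k ns)"
    by (metis append_take_drop_id sum_list_append)
  moreover have "height ns k = 0 \<longleftrightarrow> sum_list (take k ns) = k"
    by (simp add: height_def)
  ultimately show ?thesis
    unfolding tuples_def using assms by (auto simp: height_take height_drop)
qed

lemma inj_on_append_split:
  assumes K_le: "\<And>k. k \<in> K \<Longrightarrow> k \<le> n"
    and unique: "\<And>k k' ns. k \<in> K \<Longrightarrow> k' \<in> K \<Longrightarrow> length ns = n \<Longrightarrow>
      take k ns \<in> tuples (a k) k \<Longrightarrow> drop k ns \<in> tuples (b k) (n - k) \<Longrightarrow>
      take k' ns \<in> tuples (a k') k' \<Longrightarrow> drop k' ns \<in> tuples (b k') (n - k') \<Longrightarrow> k = k'"
  shows "inj_on (\<lambda>(k, x, y). x @ y) (SIGMA k:K. tuples (a k) k \<times> tuples (b k) (n - k))"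
proof (rule inj_onI, clarsimp)
  fix k x y k' x' y'
  assume k: "k \<in> K" "x \<in> tuples (a k) k" "y \<in> tuples (b k) (n - k)"
    and k': "k' \<in> K" "x' \<in> tuples (a k') k'" "y' \<in> tuples (b k') (n - k')"
    and eq: "x @ y = x' @ y'"
  have len: "length x = k" "length y = n - k" "length x' = k'" "length y' = n - k'"
    using k k' by (auto simp: tuples_def)
  have "take k (x @ y) = x" "drop k (x @ y) = y" "length (x @ y) = n"
    using len K_le[OF k(1)] by simp_all
  moreover have "take k' (x @ y) = x'" "drop k' (x @ y) = y'"
    unfolding eq using len by simp_all
  ultimately have "k = k'"
    using unique[OF k(1) k'(1), of "x @ y"] k k' by simp
  with eq len show "k = k' \<and> x = x' \<and> y = y'"
    by (simp add: append_eq_append_conv)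
qed

lemma weight_split:
  fixes f :: "nat \<Rightarrow> 'a::comm_semiring_1"
  assumes "finite K" and K_le: "\<And>k. k \<in> K \<Longrightarrow> k \<le> n"
    and split: "\<And>ns. ns \<in> tuples c n \<Longrightarrow>
      \<exists>k\<in>K. take k ns \<in> tuples (a k) k \<and> drop k ns \<in> tuples (b k) (n - k)"
    and concat: "\<And>k ns. k \<in> K \<Longrightarrow> length ns = n \<Longrightarrow>
      take k ns \<in> tuples (a k) k \<Longrightarrow> drop k ns \<in> tuples (b k) (n - k) \<Longrightarrow> ns \<in> tuples c n"
    and unique: "\<And>k k' ns. k \<in> K \<Longrightarrow> k' \<in> K \<Longrightarrow> length ns = n \<Longrightarrow>
      take k ns \<in> tuples (a k) k \<Longrightarrow> drop k ns \<in> tuples (b k) (n - k) \<Longrightarrow>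
      take k' ns \<in> tuples (a k') k' \<Longrightarrow> drop k' ns \<in> tuples (b k') (n - k') \<Longrightarrow> k = k'"
  shows "weight f c n = (\<Sum>k\<in>K. weight f (a k) k * weight f (b k) (n - k))"
proof -
  define Pairs where "Pairs = (SIGMA k:K. tuples (a k) k \<times> tuples (b k) (n - k))"
  define glue :: "nat \<times> nat list \<times> nat list \<Rightarrow> nat list" where "glue = (\<lambda>(k, x, y). x @ y)"
  have "glue ` Pairs = tuples c n"
  proof (rule set_eqI, rule iffI)
    fix ns assume "ns \<in> glue ` Pairs"
    then obtain k x y where p: "k \<in> K" "x \<in> tuples (a k) k" "y \<in> tuples (b k) (n - k)"
      and ns: "ns = x @ y"
      by (auto simp: glue_def Pairs_def)
    moreover have "length x = k" "length y = n - k"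
      using p by (auto simp: tuples_def)
    ultimately show "ns \<in> tuples c n"
      using K_le[OF p(1)] concat[of k ns] by auto
  next
    fix ns assume "ns \<in> tuples c n"
    with split obtain k where "(k, take k ns, drop k ns) \<in> Pairs"
      by (auto simp: Pairs_def)
    then show "ns \<in> glue ` Pairs"
      by (force simp: glue_def)
  qed
  moreover have "inj_on glue Pairs"
    unfolding glue_def Pairs_def using K_le unique by (rule inj_on_append_split)
  ultimately have "weight f c n = (\<Sum>p\<in>Pairs. prod_list (map f (glue p)))"
    unfolding weight_def by (metis (no_types, lifting) comp_apply sum.reindex_cong)
  also have "\<dots> = (\<Sum>k\<in>K. \<Sum>(x, y)\<in>tuples (a k) k \<times> tuples (b k) (n - k).
      prod_list (map f x) * prod_list (map f y))"
    unfolding Pairs_def using \<open>finite K\<close>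
    by (subst sum.Sigma) (auto simp: glue_def finite_tuples case_prod_unfold)
  also have "\<dots> = (\<Sum>k\<in>K. weight f (a k) k * weight f (b k) (n - k))"
    unfolding weight_def sum_product sum.cartesian_product ..
  finally show ?thesis .
qed

lemma rev_in_tuples:
  assumes "ns \<in> tuples (\<lambda>l h. c (n - l) (- h)) n"
  shows "rev ns \<in> tuples c n"
  unfolding tuples_def
proof (intro CollectI conjI allI impI)
  have ns: "length ns = n" "sum_list ns = n" "\<And>l. 1 \<le> l \<Longrightarrow> l < n \<Longrightarrow> c (n - l) (- height ns l)"
    using assms by (auto simp: tuples_def)
  then show "length (rev ns) = n" "sum_list (rev ns) = n"
    by (simp_all add: sum_list_rev)
  fix j assume j: "1 \<le> j \<and> j < n"
  then have "c (n - (n - j)) (- height ns (n - j))"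
    using ns(3)[of "n - j"] by auto
  then show "c j (height (rev ns) j)"
    using ns j by (simp add: height_rev)
qed

lemma weight_rev: "weight f c n = weight f (\<lambda>l h. c (n - l) (- h)) n"
  unfolding weight_def
proof (rule sum.reindex_bij_witness[of _ rev rev])
  fix ns assume "ns \<in> tuples c n"
  then show "rev ns \<in> tuples (\<lambda>l h. c (n - l) (- h)) n"
    by (intro rev_in_tuples) (auto simp: tuples_def intro!: arg_cong2[where f = c])
qed (auto intro: rev_in_tuples simp: rev_map[symmetric] prod_list.rev)

lemma weight_switched_rev:
  "weight f (switched p q i) n = weight f (switched (\<lambda>h. q (- h)) (\<lambda>h. p (- h)) (n - i + 1)) n"
  by (subst weight_rev) (rule weight_cong, auto simp: switched_def)

lemma height_Cons_zero: "l \<le> length xs \<Longrightarrow> height (0 # xs) (Suc l) = height (xs @ [0]) l - 1"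
  by (simp add: height_Cons_Suc height_snoc)

lemma interior_heights_Cons_zero_iff:
  assumes "1 \<le> m" "m < r" "length xs = r - 1"
  shows "(\<forall>l. 1 \<le> l \<and> l < r \<longrightarrow> neg_then_nonneg (Suc m) l (height (0 # xs) l)) \<longleftrightarrow>
    (\<forall>l. 1 \<le> l \<and> l < r - 1 \<longrightarrow> nonpos_then_pos m l (height (xs @ [0]) l))"
    (is "?L \<longleftrightarrow> ?R")
proof
  assume L: ?L
  show ?R
  proof (intro allI impI)
    fix l assume "1 \<le> l \<and> l < r - 1"
    then show "nonpos_then_pos m l (height (xs @ [0]) l)"
      using L[rule_format, of "Suc l"] height_Cons_zero[of l xs] assms by (auto simp: switched_def)
  qed
next
  assume R: ?R
  show ?L
  proof (intro allI impI)
    fix l assume l: "1 \<le> l \<and> l < r"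
    show "neg_then_nonneg (Suc m) l (height (0 # xs) l)"
    proof (cases "l = 1")
      case False
      then obtain l' where "l = Suc l'" "1 \<le> l'" "l' < r - 1"
        using l by (cases l) auto
      then show ?thesis
        using R[rule_format, of l'] height_Cons_zero[of l' xs] assms by (auto simp: switched_def)
    qed (use assms in \<open>simp add: switched_def height_def\<close>)
  qed
qed

lemma Cons_zero_in_tuples_iff:
  assumes "1 \<le> m" "m < r" "length xs = r - 1"
  shows "0 # xs \<in> tuples (neg_then_nonneg (Suc m)) r \<longleftrightarrow> xs @ [0] \<in> tuples (nonpos_then_pos m) r"
proof -
  have "(\<forall>l. 1 \<le> l \<and> l < r - 1 \<longrightarrow> nonpos_then_pos m l (height (xs @ [0]) l)) \<longleftrightarrow>
      (\<forall>l. 1 \<le> l \<and> l < r \<longrightarrow> nonpos_then_pos m l (height (xs @ [0]) l))" (is "?R \<longleftrightarrow> _")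
    if "sum_list xs = r"
  proof (intro iffI allI impI)
    fix l assume R: ?R and l: "1 \<le> l \<and> l < r"
    have "height (xs @ [0]) (r - 1) = 1"
      using that assms by (simp add: height_def)
    with R l assms show "nonpos_then_pos m l (height (xs @ [0]) l)"
      by (cases "l = r - 1") (auto simp: switched_def)
  qed auto
  then show ?thesis
    using assms interior_heights_Cons_zero_iff[OF assms] unfolding tuples_def by auto
qed

lemma tuples_neg_then_nonneg_hd:
  assumes "ns \<in> tuples (neg_then_nonneg (Suc m)) r" "1 \<le> m" "m < r"
  obtains xs where "ns = 0 # xs" "length xs = r - 1"
proof -
  obtain x xs where ns: "ns = x # xs" "length xs = r - 1"
    using assms by (cases ns) (auto simp: tuples_def)
  have "height ns 1 < 0"
    using assms by (auto simp: tuples_def switched_def)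
  then have "x = 0"
    by (simp add: ns height_def)
  with ns that show thesis by blast
qed

lemma tuples_nonpos_then_pos_last:
  assumes "ns \<in> tuples (nonpos_then_pos m) r" "1 \<le> m" "m < r"
  obtains xs where "ns = xs @ [0]" "length xs = r - 1"
proof -
  obtain xs y where ns: "ns = xs @ [y]" "length xs = r - 1"
    using assms by (cases ns rule: rev_exhaust) (auto simp: tuples_def)
  have "0 < height ns (r - 1)" "sum_list ns = r"
    using assms by (auto simp: tuples_def switched_def)
  then have "y = 0"
    using ns by (simp add: height_def)
  with ns that show thesis by blast
qed

text \<open>Moving the leading zero step to the end raises every height by one and shifts it one step earlier.\<close>
lemma weight_rotate:
  assumes "1 \<le> m" "m < r"
  shows "weight f (nonpos_then_pos m) r = weight f (neg_then_nonneg (Suc m)) r"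
  unfolding weight_def
proof (rule sum.reindex_bij_witness[of _ "\<lambda>ns. tl ns @ [0]" "\<lambda>ns. 0 # butlast ns"])
  fix ns assume ns: "ns \<in> tuples (nonpos_then_pos m) r"
  then obtain xs where xs: "ns = xs @ [0]" "length xs = r - 1"
    using assms by (rule tuples_nonpos_then_pos_last)
  show "tl (0 # butlast ns) @ [0] = ns" "0 # butlast ns \<in> tuples (neg_then_nonneg (Suc m)) r"
    "prod_list (map f (0 # butlast ns)) = prod_list (map f ns)"
    using ns xs Cons_zero_in_tuples_iff[OF assms xs(2)] by (simp_all add: mult.commute)
next
  fix ns assume ns: "ns \<in> tuples (neg_then_nonneg (Suc m)) r"
  then obtain xs where xs: "ns = 0 # xs" "length xs = r - 1"
    using assms by (rule tuples_neg_then_nonneg_hd)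
  show "0 # butlast (tl ns @ [0]) = ns" "tl ns @ [0] \<in> tuples (nonpos_then_pos m) r"
    using ns xs Cons_zero_in_tuples_iff[OF assms xs(2)] by simp_all
qed

lemma first_zero_split_iff:
  assumes "length ns = r" "1 \<le> j" "j \<le> k" "k \<le> r"
  shows "take k ns \<in> tuples (neg_then_pos j) k \<and> drop k ns \<in> tuples (\<lambda>_ h. 0 \<le> h) (r - k) \<longleftrightarrow>
    ns \<in> tuples (neg_then_nonneg j) r \<and> height ns k = 0 \<and> (\<forall>l. j \<le> l \<and> l < k \<longrightarrow> height ns l \<noteq> 0)"
  (is "?split \<longleftrightarrow> ?first_zero")
proof
  assume ?split
  then have sum: "sum_list ns = r" and zero: "height ns k = 0"
    and before: "\<And>l. 1 \<le> l \<Longrightarrow> l < k \<Longrightarrow> neg_then_pos j l (height ns l)"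
    and after: "\<And>l. 1 \<le> l \<Longrightarrow> l < r - k \<Longrightarrow> 0 \<le> height ns (k + l)"
    unfolding take_drop_in_tuples_iff[OF assms(1,4)] by auto
  have "neg_then_nonneg j l (height ns l)" if "1 \<le> l" "l < r" for l
  proof -
    consider "l < k" | "l = k" | "k < l" by linarith
    then show ?thesis
    proof cases
      case 3
      then show ?thesis
        using after[of "l - k"] that assms by (simp add: switched_def)
    qed (use before[of l] zero that assms in \<open>auto simp: switched_def\<close>)
  qed
  moreover have "height ns l \<noteq> 0" if "j \<le> l" "l < k" for l
    using before[of l] that assms by (simp add: switched_def)
  ultimately show ?first_zero
    using assms sum zero by (simp add: tuples_def)
next
  assume ?first_zero
  then have sum: "sum_list ns = r" and zero: "height ns k = 0"
    and signs: "\<And>l. 1 \<le> l \<Longrightarrow> l < r \<Longrightarrow> neg_then_nonneg j l (height ns l)"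
    and nonzero: "\<And>l. j \<le> l \<Longrightarrow> l < k \<Longrightarrow> height ns l \<noteq> 0"
    by (auto simp: tuples_def)
  have "neg_then_pos j l (height ns l)" if "1 \<le> l" "l < k" for l
    using signs[of l] nonzero[of l] that assms by (auto simp: switched_def)
  moreover have "0 \<le> height ns (k + l)" if "1 \<le> l" "l < r - k" for l
    using signs[of "k + l"] that assms by (simp add: switched_def)
  ultimately show ?split
    unfolding take_drop_in_tuples_iff[OF assms(1,4)] using sum zero by blast
qed

lemma weight_first_zero_split:
  assumes "1 \<le> j" "j \<le> r"
  shows "weight f (neg_then_nonneg j) r =
    (\<Sum>k\<in>{j..r}. weight f (neg_then_pos j) k * weight f (\<lambda>_ h. 0 \<le> h) (r - k))"
proof (rule weight_split)
  fix ns assume ns: "ns \<in> tuples (neg_then_nonneg j) r"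
  define k where "k = (LEAST k. j \<le> k \<and> height ns k = 0)"
  have "j \<le> r \<and> height ns r = 0"
    using ns assms by (simp add: tuples_def height_length)
  then have k: "j \<le> k" "k \<le> r" "height ns k = 0" "\<And>l. j \<le> l \<Longrightarrow> l < k \<Longrightarrow> height ns l \<noteq> 0"
    unfolding k_def by (auto dest: not_less_Least intro: Least_le LeastI2_wellorder)
  moreover have "length ns = r"
    using ns by (simp add: tuples_def)
  ultimately have "take k ns \<in> tuples (neg_then_pos j) k \<and> drop k ns \<in> tuples (\<lambda>_ h. 0 \<le> h) (r - k)"
    using ns by (simp add: first_zero_split_iff[OF _ assms(1)])
  with k show "\<exists>k\<in>{j..r}. take k ns \<in> tuples (neg_then_pos j) k
      \<and> drop k ns \<in> tuples (\<lambda>_ h. 0 \<le> h) (r - k)"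
    by auto
next
  fix k k' ns
  assume "k \<in> {j..r}" "k' \<in> {j..r}" "length ns = r"
    and "take k ns \<in> tuples (neg_then_pos j) k" "drop k ns \<in> tuples (\<lambda>_ h. 0 \<le> h) (r - k)"
    and "take k' ns \<in> tuples (neg_then_pos j) k'" "drop k' ns \<in> tuples (\<lambda>_ h. 0 \<le> h) (r - k')"
  then have "height ns k = 0" "height ns k' = 0"
    "\<forall>l. j \<le> l \<and> l < k \<longrightarrow> height ns l \<noteq> 0" "\<forall>l. j \<le> l \<and> l < k' \<longrightarrow> height ns l \<noteq> 0"
    using first_zero_split_iff[OF _ assms(1)] by auto
  with \<open>k \<in> {j..r}\<close> \<open>k' \<in> {j..r}\<close> show "k = k'"
    by (metis atLeastAtMost_iff linorder_neqE_nat)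
next
  fix k ns
  assume "k \<in> {j..r}" "length ns = r"
    "take k ns \<in> tuples (neg_then_pos j) k" "drop k ns \<in> tuples (\<lambda>_ h. 0 \<le> h) (r - k)"
  then show "ns \<in> tuples (neg_then_nonneg j) r"
    using first_zero_split_iff[OF _ assms(1)] by auto
qed auto

lemma last_zero_split_iff:
  assumes "length ns = n" "k < n"
  shows "take k ns \<in> tuples (\<lambda>_ h. h \<le> 0) k \<and> drop k ns \<in> tuples (\<lambda>_ h. h < 0) (n - k) \<longleftrightarrow>
    ns \<in> tuples (\<lambda>_ h. h \<le> 0) n \<and> height ns k = 0 \<and> (\<forall>l. k < l \<and> l < n \<longrightarrow> height ns l \<noteq> 0)"
  (is "?split \<longleftrightarrow> ?last_zero")
proof
  assume ?split
  then have sum: "sum_list ns = n" and zero: "height ns k = 0"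
    and before: "\<And>l. 1 \<le> l \<Longrightarrow> l < k \<Longrightarrow> height ns l \<le> 0"
    and after: "\<And>l. 1 \<le> l \<Longrightarrow> l < n - k \<Longrightarrow> height ns (k + l) < 0"
    unfolding take_drop_in_tuples_iff[OF assms(1) less_imp_le[OF assms(2)]] by auto
  have neg: "height ns l < 0" if "k < l" "l < n" for l
    using after[of "l - k"] that by simp
  have "height ns l \<le> 0" if "l < n" for l
    using before[of l] zero neg[of l] that
    by (cases "l = 0"; cases l k rule: linorder_cases) auto
  with neg show ?last_zero
    using assms sum zero by (force simp: tuples_def)
next
  assume ?last_zero
  then have sum: "sum_list ns = n" and zero: "height ns k = 0"
    and signs: "\<And>l. 1 \<le> l \<Longrightarrow> l < n \<Longrightarrow> height ns l \<le> 0"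
    and nonzero: "\<And>l. k < l \<Longrightarrow> l < n \<Longrightarrow> height ns l \<noteq> 0"
    by (auto simp: tuples_def)
  have "height ns (k + l) < 0" if "1 \<le> l" "l < n - k" for l
    using signs[of "k + l"] nonzero[of "k + l"] that by fastforce
  with signs sum zero assms show ?split
    unfolding take_drop_in_tuples_iff[OF assms(1) less_imp_le[OF assms(2)]] by auto
qed

lemma weight_last_zero_split:
  assumes "1 \<le> n"
  shows "weight f (\<lambda>_ h. h \<le> 0) n =
    (\<Sum>k<n. weight f (\<lambda>_ h. h \<le> 0) k * weight f (\<lambda>_ h. h < 0) (n - k))"
proof (rule weight_split)
  fix ns assume ns: "ns \<in> tuples (\<lambda>_ h. h \<le> 0) n"
  define k where "k = (GREATEST k. k < n \<and> height ns k = 0)"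
  let ?zero = "\<lambda>k. k < n \<and> height ns k = 0"
  have "?zero 0" and bounded: "\<And>k. ?zero k \<Longrightarrow> k \<le> n"
    using assms by simp_all
  have "?zero k"
    unfolding k_def using \<open>?zero 0\<close> bounded by (rule GreatestI_nat)
  moreover have "l \<le> k" if "?zero l" for l
    unfolding k_def using that bounded by (rule Greatest_le_nat)
  ultimately have k: "k < n" "height ns k = 0" "\<And>l. k < l \<Longrightarrow> l < n \<Longrightarrow> height ns l \<noteq> 0"
    by (auto simp: not_le[symmetric])
  moreover have "length ns = n"
    using ns by (simp add: tuples_def)
  ultimately have "take k ns \<in> tuples (\<lambda>_ h. h \<le> 0) k \<and> drop k ns \<in> tuples (\<lambda>_ h. h < 0) (n - k)"
    using ns by (simp add: last_zero_split_iff)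
  with k show "\<exists>k\<in>{..<n}. take k ns \<in> tuples (\<lambda>_ h. h \<le> 0) k
      \<and> drop k ns \<in> tuples (\<lambda>_ h. h < 0) (n - k)"
    by auto
next
  fix k k' ns
  assume "k \<in> {..<n}" "k' \<in> {..<n}" "length ns = n"
    and "take k ns \<in> tuples (\<lambda>_ h. h \<le> 0) k" "drop k ns \<in> tuples (\<lambda>_ h. h < 0) (n - k)"
    and "take k' ns \<in> tuples (\<lambda>_ h. h \<le> 0) k'" "drop k' ns \<in> tuples (\<lambda>_ h. h < 0) (n - k')"
  then have "height ns k = 0" "height ns k' = 0"
    "\<forall>l. k < l \<and> l < n \<longrightarrow> height ns l \<noteq> 0" "\<forall>l. k' < l \<and> l < n \<longrightarrow> height ns l \<noteq> 0"
    using last_zero_split_iff by auto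
  with \<open>k \<in> {..<n}\<close> \<open>k' \<in> {..<n}\<close> show "k = k'"
    by (metis lessThan_iff linorder_neqE_nat)
next
  fix k ns
  assume "k \<in> {..<n}" "length ns = n"
    "take k ns \<in> tuples (\<lambda>_ h. h \<le> 0) k" "drop k ns \<in> tuples (\<lambda>_ h. h < 0) (n - k)"
  then show "ns \<in> tuples (\<lambda>_ h. h \<le> 0) n"
    using last_zero_split_iff by auto
qed auto

lemma weight_nonneg_eq_nonpos: "weight f (\<lambda>_ h. 0 \<le> h) n = weight f (\<lambda>_ h. h \<le> 0) n"
  by (subst weight_rev) simp

lemma weight_nonneg_split:
  assumes "1 \<le> n"
  shows "weight f (\<lambda>_ h. 0 \<le> h) n =
    (\<Sum>k<n. weight f (\<lambda>_ h. 0 \<le> h) k * weight f (\<lambda>_ h. h < 0) (n - k))"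
  using weight_last_zero_split[OF assms] by (simp add: weight_nonneg_eq_nonpos)

lemma weight_nonneg_split_shifted:
  assumes "t < r"
  shows "(\<Sum>k\<in>{t..<r}. weight f (\<lambda>_ h. 0 \<le> h) (k - t) * weight f (\<lambda>_ h. h < 0) (r - k)) =
    weight f (\<lambda>_ h. 0 \<le> h) (r - t)"
proof -
  have "{t..<r} = (\<lambda>s. s + t) ` {..<r - t}"
    using assms by (auto simp: image_iff) (metis add.commute le_add_diff_inverse diff_less_mono lessThan_iff)
  then show ?thesis
    using weight_nonneg_split[of "r - t" f] assms by (simp add: sum.reindex add.commute Suc_le_eq)
qed

lemma weight_first_zero_convolution:
  fixes f :: "nat \<Rightarrow> 'a::comm_ring_1"
  assumes "1 \<le> j" "j \<le> r"
  shows "(\<Sum>k\<in>{j..<r}. weight f (neg_then_nonneg j) k * weight f (\<lambda>_ h. h < 0) (r - k))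
    = weight f (neg_then_nonneg j) r - weight f (neg_then_pos j) r"
proof -
  define Y where "Y t = weight f (neg_then_pos j) t" for t
  define E where "E t = weight f (\<lambda>_ h. 0 \<le> h) t" for t
  define N where "N t = weight f (\<lambda>_ h. h < 0) t" for t
  have "(\<Sum>k\<in>{j..<r}. weight f (neg_then_nonneg j) k * N (r - k))
      = (\<Sum>k\<in>{j..<r}. \<Sum>t\<in>{t\<in>{j..<r}. t \<le> k}. Y t * E (k - t) * N (r - k))"
  proof (rule sum.cong)
    fix k assume k: "k \<in> {j..<r}"
    then have "{t\<in>{j..<r}. t \<le> k} = {j..k}"
      by auto
    with k show "weight f (neg_then_nonneg j) k * N (r - k)
        = (\<Sum>t\<in>{t\<in>{j..<r}. t \<le> k}. Y t * E (k - t) * N (r - k))"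
      using weight_first_zero_split[of j k f] assms by (simp add: Y_def E_def sum_distrib_right)
  qed simp
  also have "\<dots> = (\<Sum>t\<in>{j..<r}. Y t * (\<Sum>k\<in>{k\<in>{j..<r}. t \<le> k}. E (k - t) * N (r - k)))"
    by (subst sum.swap_restrict) (simp_all add: sum_distrib_left mult.assoc)
  also have "\<dots> = (\<Sum>t\<in>{j..<r}. Y t * E (r - t))"
  proof (rule sum.cong)
    fix t assume t: "t \<in> {j..<r}"
    then have "{k\<in>{j..<r}. t \<le> k} = {t..<r}"
      by auto
    with t show "Y t * (\<Sum>k\<in>{k\<in>{j..<r}. t \<le> k}. E (k - t) * N (r - k)) = Y t * E (r - t)"
      using weight_nonneg_split_shifted[of t r f] by (simp add: E_def N_def)
  qed simp
  also have "\<dots> = weight f (neg_then_nonneg j) r - Y r"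
  proof -
    have "{j..r} = insert r {j..<r}"
      using assms by auto
    then show ?thesis
      using weight_first_zero_split[OF assms, of f] by (simp add: Y_def E_def)
  qed
  finally show ?thesis
    by (simp add: N_def Y_def)
qed

lemma sum_nth_lessThan: "j \<le> length ns \<Longrightarrow> (\<Sum>l<j. ns ! l) = sum_list (take j ns)"
  by (simp add: sum_list_sum_nth atLeast0LessThan)

lemma sum_nth_atLeastLessThan:
  fixes ns :: "'a::comm_monoid_add list"
  assumes "j \<le> length ns"
  shows "(\<Sum>l\<in>{j..<length ns}. ns ! l) = sum_list (drop j ns)"
proof -
  have "sum_list (drop j ns) = (\<Sum>i\<in>{0..<length ns - j}. ns ! (i + j))"
    using assms by (simp add: sum_list_sum_nth add.commute)
  also have "\<dots> = (\<Sum>l\<in>{j..<length ns}. ns ! l)"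
    using assms sum.shift_bounds_nat_ivl[of "(!) ns" 0 j "length ns - j"] by simp
  finally show ?thesis ..
qed

lemma all_switched_iff:
  "(\<forall>j. 1 \<le> j \<and> j < r \<longrightarrow> switched p q i j (height ns j)) \<longleftrightarrow>
    (\<forall>j. 1 \<le> j \<and> j < i \<and> j < r \<longrightarrow> p (height ns j)) \<and> (\<forall>j. 1 \<le> j \<and> i \<le> j \<and> j < r \<longrightarrow> q (height ns j))"
  by (auto simp: switched_def not_less)

lemma S_set_eq_tuples:
  assumes "i \<le> r"
  shows "S_set i r = tuples (neg_then_nonneg i) r"
proof (rule set_eqI)
  fix ns
  show "ns \<in> S_set i r \<longleftrightarrow> ns \<in> tuples (neg_then_nonneg i) r"
  proof (cases "length ns = r \<and> sum_list ns = r")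
    case True
    have split: "sum_list (take j ns) + sum_list (drop j ns) = r" for j
      using True by (metis append_take_drop_id sum_list_append)
    have "(\<Sum>l<j. ns ! l) < j \<longleftrightarrow> height ns j < 0" if "j < r" for j
      using that True by (simp add: sum_nth_lessThan height_def)
    then have prefix: "(\<forall>j. 1 \<le> j \<and> j < i \<longrightarrow> (\<Sum>l<j. ns ! l) < j) \<longleftrightarrow>
        (\<forall>j. 1 \<le> j \<and> j < i \<and> j < r \<longrightarrow> height ns j < 0)"
      using assms by auto
    have "(\<Sum>l\<in>{j..<r}. ns ! l) \<le> r - j \<longleftrightarrow> 0 \<le> height ns j" if "j < r" for j
    proof -
      have "(\<Sum>l\<in>{j..<r}. ns ! l) = sum_list (drop j ns)"
        using that True sum_nth_atLeastLessThan[of j ns] by simp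
      then show ?thesis
        using split[of j] that by (simp add: height_def) arith
    qed
    then have suffix: "(\<forall>j. i \<le> j \<and> j < r \<longrightarrow> (\<Sum>l\<in>{j..<r}. ns ! l) \<le> r - j) \<longleftrightarrow>
        (\<forall>j. 1 \<le> j \<and> i \<le> j \<and> j < r \<longrightarrow> 0 \<le> height ns j)"
      by (auto simp: Suc_le_eq) (metis gr0I height_0 order_refl)
    show ?thesis
      using True unfolding S_set_def tuples_def mem_Collect_eq all_switched_iff prefix suffix by simp
  qed (auto simp: S_set_def tuples_def)
qed

lemma prod_list_map_eq_prod_nth: "prod_list (map f xs) = (\<Prod>i<length xs. f (xs ! i))"
  by (simp add: prod.list_conv_set_nth atLeast0LessThan)

lemma C_coef_eq_weight:
  assumes "i \<le> r"
  shows "C_coef i r a = (-1) ^ r * weight (\<lambda>n. bernpoly n a / fact n) (neg_then_nonneg i) r"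
  unfolding C_coef_def weight_def S_set_eq_tuples[OF assms]
  by (simp add: tuples_def prod_list_map_eq_prod_nth)

lemma C_coef_convolution:
  assumes "1 \<le> j" "j \<le> r"
  shows "(\<Sum>k = j..r - 1. C_coef j k a * C_coef (r - k) (r - k) a) =
    (-1) ^ r * (weight (\<lambda>n. bernpoly n a / fact n) (neg_then_nonneg j) r
      - weight (\<lambda>n. bernpoly n a / fact n) (neg_then_pos j) r)"
proof -
  let ?f = "\<lambda>n. bernpoly n a / fact n"
  have "C_coef j k a * C_coef (r - k) (r - k) a =
      (-1) ^ r * (weight ?f (neg_then_nonneg j) k * weight ?f (\<lambda>_ h. h < 0) (r - k))"
    if "k \<in> {j..<r}" for k
  proof -
    have "weight ?f (neg_then_nonneg (r - k)) (r - k) = weight ?f (\<lambda>_ h. h < 0) (r - k)"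
      by (rule weight_cong) (simp add: switched_def)
    moreover have "(-1::real) ^ k * (-1) ^ (r - k) = (-1) ^ r"
      using that by (simp flip: power_add)
    ultimately show ?thesis
      using that by (simp add: C_coef_eq_weight)
  qed
  then have "(\<Sum>k = j..r - 1. C_coef j k a * C_coef (r - k) (r - k) a) =
      (-1) ^ r * (\<Sum>k = j..<r. weight ?f (neg_then_nonneg j) k * weight ?f (\<lambda>_ h. h < 0) (r - k))"
    using assms by (simp add: sum_distrib_left atLeastLessThanSuc_atLeastAtMost[symmetric])
  then show ?thesis
    by (simp add: weight_first_zero_convolution[OF assms])
qed

theorem theorem6p1:
  fixes i r :: nat and a :: real
  assumes "1 \<le> i" and "i < r"
  shows "C_coef (Suc i) r a = C_coef i r a
    + (\<Sum>k = r - i + 1..r - 1. C_coef (r - i + 1) k a * C_coef (r - k) (r - k) a)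
    - (\<Sum>k = i..r - 1. C_coef i k a * C_coef (r - k) (r - k) a)"
proof -
  let ?W = "weight (\<lambda>n. bernpoly n a / fact n)"
  have "?W (neg_then_nonneg (Suc i)) r = ?W (nonpos_then_pos (r - i)) r"
    using weight_switched_rev[of _ "\<lambda>h. h < 0" "\<lambda>h. 0 \<le> h" "Suc i" r] assms by (simp add: Suc_diff_Suc)
  also have "\<dots> = ?W (neg_then_nonneg (r - i + 1)) r"
    using assms by (simp add: weight_rotate)
  finally have C_Suc: "C_coef (Suc i) r a = (-1) ^ r * ?W (neg_then_nonneg (r - i + 1)) r"
    using assms by (simp add: C_coef_eq_weight)
  have pos_sym: "?W (neg_then_pos i) r = ?W (neg_then_pos (r - i + 1)) r"
    using weight_switched_rev[of _ "\<lambda>h. h < 0" "\<lambda>h. 0 < h" i r] by simp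
  have C_i: "C_coef i r a = (-1) ^ r * ?W (neg_then_nonneg i) r"
    using assms by (simp add: C_coef_eq_weight)
  have bounds: "i \<le> r" "1 \<le> r - i + 1" "r - i + 1 \<le> r"
    using assms by auto
  show ?thesis
    unfolding C_Suc C_i C_coef_convolution[OF assms(1) bounds(1)] C_coef_convolution[OF bounds(2,3)] pos_sym
    by (simp add: algebra_simps)
qed

end
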